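(* Let $p\ge1$, $\phi_1,\dots,\phi_p:\mathbb Z\to\mathbb C$, $s\in\mathbb Z$, and let $y:\{s-p+1,s-p+2,\dots\}\to\mathbb C$ satisfy $y_t=\sum_{l=1}^p\phi_l(t)y_{t-l}$ for all $t\ge s+1$. Then for all $t\ge s-p+1$, $$y_t=\sum_{m=1}^{p}\xi^{(m)}_{t,s}\,y_{s-m+1}.$$
   Context: Convention: $\phi_l(t)=0$ for $l>p$. For integers $t>s$ and $1\le m\le p$, $\Phi^{(m)}_{t,s}$ is the $(t-s)\times(t-s)$ lower Hessenberg matrix whose $(i,j)$ entry is: $\phi_{m+i-1}(s+i)$ if $j=1$; $-1$ if $j=i+1$; $\phi_{i-j+1}(s+i)$ if $2\le j\le i$; $0$ if $j>i+1$. For $t\ge s-p+1$: $\xi^{(m)}_{t,s}=\det\Phi^{(m)}_{t,s}$ if $t>s$; $\xi^{(m)}_{t,s}=1$ if $t=s-m+1$; $\xi^{(m)}_{t,s}=0$ if $s-p+1\le t\le s$, $t\ne s-m+1$. *)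

theory Defs
  imports "Jordan_Normal_Form.Determinant"
begin

definition phiext :: "nat \<Rightarrow> (nat \<Rightarrow> int \<Rightarrow> complex) \<Rightarrow> nat \<Rightarrow> int \<Rightarrow> complex" where
  "phiext p \<phi> l t = (if 1 \<le> l \<and> l \<le> p then \<phi> l t else 0)"

text \<open>The (t-s) x (t-s) lower Hessenberg matrix Phi^(m)_{t,s}; entries written
  with 0-based indices i0 = i-1, j0 = j-1 of the 1-based (i,j) in the paper.\<close>
definition PhiMat :: "nat \<Rightarrow> (nat \<Rightarrow> int \<Rightarrow> complex) \<Rightarrow> nat \<Rightarrow> int \<Rightarrow> int \<Rightarrow> complex mat" where
  "PhiMat p \<phi> m t s = mat (nat (t - s)) (nat (t - s)) (\<lambda>(i0, j0).
     if j0 = 0 then phiext p \<phi> (m + i0) (s + int i0 + 1)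
     else if j0 = i0 + 1 then -1
     else if j0 \<le> i0 then phiext p \<phi> (i0 - j0 + 1) (s + int i0 + 1)
     else 0)"

definition xi :: "nat \<Rightarrow> (nat \<Rightarrow> int \<Rightarrow> complex) \<Rightarrow> nat \<Rightarrow> int \<Rightarrow> int \<Rightarrow> complex" where
  "xi p \<phi> m t s = (if t > s then det (PhiMat p \<phi> m t s)
                    else if t = s - int m + 1 then 1 else 0)"

end

theory Submission
  imports Defs
begin

text \<open>For s-p+1 \<le> t \<le> s the claim is the definition of xi. For t > s put n = t - s and
  v = (1, y(s+1), ..., y(s+n-1)). Merge the first columns of the matrices Phi^(m)_{t,s} into the
  single column sum_m y(s-m+1) Phi^(m)_{t,s} e_1; the resulting matrix B has
  det B = sum_m xi^(m)_{t,s} y(s-m+1) by linearity of det in that column.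
  Row i of B v is the recurrence at time s+i+1 minus the term y(s+i+1) coming from the -1 on the
  superdiagonal, so B v = y_t e_n. Cramer's rule then gives det B = det B * v_1 = det (B with
  first column replaced by y_t e_n), and expanding along that column leaves y_t times the
  cofactor of a lower triangular matrix with -1 on its diagonal, which is exactly 1.\<close>

lemma sum_shifted_plus_reversed:
  fixes g :: "nat \<Rightarrow> 'a::comm_monoid_add"
  shows "(\<Sum>m = 1..p. g (m + i)) + (\<Sum>j = 1..i. g (i - j + 1)) = (\<Sum>l = 1..p + i. g l)"
proof -
  have shifted: "(\<Sum>m = 1..p. g (m + i)) = sum g {1 + i..p + i}"
    by (subst sum.shift_bounds_cl_nat_ivl) simp
  have reversed: "(\<Sum>j = 1..i. g (i - j + 1)) = sum g {1..i}"
    by (rule sum.reindex_bij_witness[of _ "\<lambda>l. i + 1 - l" "\<lambda>j. i + 1 - j"])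
      (auto simp: Suc_diff_le)
  show ?thesis
    unfolding shifted reversed using sum.ub_add_nat[of 1 i g p] by (simp add: ac_simps)
qed

lemma sum_phiext_lags:
  fixes y :: "int \<Rightarrow> complex"
  shows "(\<Sum>l = 1..p + i. phiext p \<phi> l T * y (T - int l)) = (\<Sum>l = 1..p. \<phi> l T * y (T - int l))"
proof -
  let ?f = "\<lambda>l. phiext p \<phi> l T * y (T - int l)"
  have "sum ?f {1..p + i} = sum ?f {1..p} + sum ?f {p + 1..p + i}"
    using sum.ub_add_nat[of 1 p ?f i] by simp
  also have "sum ?f {p + 1..p + i} = 0"
    by (rule sum.neutral) (auto simp: phiext_def)
  finally show ?thesis
    by (simp add: phiext_def)
qed

lemma det_linear_first_column:
  fixes A :: "'b \<Rightarrow> 'a::comm_ring_1 mat"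
  assumes B: "B \<in> carrier_mat n n" and A: "\<And>m. m \<in> M \<Longrightarrow> A m \<in> carrier_mat n n" and "0 < n"
    and same_cols: "\<And>m i. m \<in> M \<Longrightarrow> i < n \<Longrightarrow> mat_delete B i 0 = mat_delete (A m) i 0"
    and first_col: "\<And>i. i < n \<Longrightarrow> B $$ (i, 0) = (\<Sum>m\<in>M. c m * A m $$ (i, 0))"
  shows "det B = (\<Sum>m\<in>M. c m * det (A m))"
proof -
  have "det B = (\<Sum>i<n. B $$ (i, 0) * cofactor B i 0)"
    using laplace_expansion_column[OF B] \<open>0 < n\<close> by simp
  also have "\<dots> = (\<Sum>i<n. \<Sum>m\<in>M. c m * (A m $$ (i, 0) * cofactor (A m) i 0))"
  proof (intro sum.cong refl)
    fix i assume "i \<in> {..<n}"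
    then have "B $$ (i, 0) * cofactor B i 0 = (\<Sum>m\<in>M. c m * A m $$ (i, 0) * cofactor B i 0)"
      by (simp add: first_col sum_distrib_right)
    also have "\<dots> = (\<Sum>m\<in>M. c m * (A m $$ (i, 0) * cofactor (A m) i 0))"
      using same_cols \<open>i \<in> {..<n}\<close> by (intro sum.cong) (simp_all add: cofactor_def)
    finally show "B $$ (i, 0) * cofactor B i 0 = (\<Sum>m\<in>M. c m * (A m $$ (i, 0) * cofactor (A m) i 0))" .
  qed
  also have "\<dots> = (\<Sum>m\<in>M. c m * (\<Sum>i<n. A m $$ (i, 0) * cofactor (A m) i 0))"
    by (subst sum.swap) (simp add: sum_distrib_left)
  also have "\<dots> = (\<Sum>m\<in>M. c m * det (A m))"
    using laplace_expansion_column[OF A, of _ 0] \<open>0 < n\<close> by simp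
  finally show ?thesis .
qed

lemma det_first_column_last_unit:
  fixes R :: "'a::comm_ring_1 mat"
  assumes R: "R \<in> carrier_mat n n" and "0 < n"
    and first_col: "\<And>i. i < n \<Longrightarrow> R $$ (i, 0) = (if i = n - 1 then c else 0)"
  shows "det R = c * (-1) ^ (n - 1) * det (mat_delete R (n - 1) 0)"
proof -
  have "det R = (\<Sum>i<n. R $$ (i, 0) * cofactor R i 0)"
    using laplace_expansion_column[OF R] \<open>0 < n\<close> by simp
  also have "\<dots> = (\<Sum>i<n. if i = n - 1 then c * cofactor R i 0 else 0)"
    by (intro sum.cong) (auto simp: first_col)
  also have "\<dots> = c * cofactor R (n - 1) 0"
    using \<open>0 < n\<close> by (simp add: sum.delta)
  finally show ?thesis
    by (simp add: cofactor_def)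
qed

lemma PhiMat_carrier: "PhiMat p \<phi> m t s \<in> carrier_mat (nat (t - s)) (nat (t - s))"
  by (simp add: PhiMat_def)

lemma PhiMat_index:
  assumes "i < nat (t - s)" "j < nat (t - s)"
  shows "PhiMat p \<phi> m t s $$ (i, j) =
    (if j = 0 then phiext p \<phi> (m + i) (s + int i + 1)
     else if j = i + 1 then -1
     else if j \<le> i then phiext p \<phi> (i - j + 1) (s + int i + 1)
     else 0)"
  using assms by (simp add: PhiMat_def)

lemma PhiMat_row_tail:
  fixes y :: "int \<Rightarrow> complex"
  assumes "i < nat (t - s)"
  defines "T \<equiv> s + int i + 1"
  shows "(\<Sum>j = 1..<nat (t - s). PhiMat p \<phi> m t s $$ (i, j) * y (s + int j))
    = (\<Sum>j = 1..i. phiext p \<phi> (i - j + 1) T * y (T - int (i - j + 1)))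
      - (if i + 1 < nat (t - s) then y T else 0)"
proof -
  let ?n = "nat (t - s)" and ?a = "\<lambda>j. phiext p \<phi> (i - j + 1) T * y (T - int (i - j + 1))"
  have "(\<Sum>j = 1..<?n. PhiMat p \<phi> m t s $$ (i, j) * y (s + int j))
      = (\<Sum>j = 1..<?n. (if j \<le> i then ?a j else 0) - (if j = i + 1 then y T else 0))"
    using assms by (intro sum.cong) (auto simp: PhiMat_index T_def of_nat_diff ac_simps)
  also have "\<dots> = (\<Sum>j = 1..<?n. if j \<le> i then ?a j else 0)
      - (\<Sum>j = 1..<?n. if j = i + 1 then y T else 0)"
    by (simp only: sum_subtractf)
  also have "(\<Sum>j = 1..<?n. if j \<le> i then ?a j else 0) = (\<Sum>j = 1..i. ?a j)"
    using assms by (intro sum.mono_neutral_cong_right) auto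
  also have "(\<Sum>j = 1..<?n. if j = i + 1 then y T else 0) = (if i + 1 < ?n then y T else 0)"
    by (subst sum.delta) auto
  finally show ?thesis .
qed

definition PhiMat_merged ::
    "nat \<Rightarrow> (nat \<Rightarrow> int \<Rightarrow> complex) \<Rightarrow> (int \<Rightarrow> complex) \<Rightarrow> int \<Rightarrow> int \<Rightarrow> complex mat" where
  "PhiMat_merged p \<phi> y t s = mat (nat (t - s)) (nat (t - s)) (\<lambda>(i, j).
     if j = 0 then (\<Sum>m = 1..p. y (s - int m + 1) * PhiMat p \<phi> m t s $$ (i, 0))
     else PhiMat p \<phi> 1 t s $$ (i, j))"

lemma PhiMat_merged_carrier:
  "PhiMat_merged p \<phi> y t s \<in> carrier_mat (nat (t - s)) (nat (t - s))"
  by (simp add: PhiMat_merged_def)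

lemma det_PhiMat_merged:
  assumes "s < t"
  shows "det (PhiMat_merged p \<phi> y t s) = (\<Sum>m = 1..p. det (PhiMat p \<phi> m t s) * y (s - int m + 1))"
proof -
  have "mat_delete (PhiMat_merged p \<phi> y t s) i 0 = mat_delete (PhiMat p \<phi> m t s) i 0"
    if "i < nat (t - s)" for m i
    using that PhiMat_carrier[of p \<phi> m t s]
    by (intro eq_matI) (auto simp: mat_delete_def PhiMat_merged_def PhiMat_index)
  then show ?thesis
    using det_linear_first_column[where B = "PhiMat_merged p \<phi> y t s" and n = "nat (t - s)"
        and M = "{1..p}" and A = "\<lambda>m. PhiMat p \<phi> m t s" and c = "\<lambda>m. y (s - int m + 1)"]
      PhiMat_merged_carrier PhiMat_carrier assms
    by (simp add: PhiMat_merged_def mult.commute)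
qed

lemma PhiMat_merged_mult_vec:
  fixes y :: "int \<Rightarrow> complex"
  assumes rec: "\<And>t. t \<ge> s + 1 \<Longrightarrow> y t = (\<Sum>l = 1..p. \<phi> l t * y (t - int l))"
    and "s < t"
  defines "n \<equiv> nat (t - s)"
  shows "PhiMat_merged p \<phi> y t s *\<^sub>v vec n (\<lambda>j. if j = 0 then 1 else y (s + int j))
    = vec n (\<lambda>i. if i = n - 1 then y t else 0)"
    (is "?B *\<^sub>v ?v = ?w")
proof (rule eq_vecI)
  fix i assume "i < dim_vec ?w"
  then have i: "i < n"
    by simp
  let ?T = "s + int i + 1"
  define g where "g l = phiext p \<phi> l ?T * y (?T - int l)" for l
  have "(?B *\<^sub>v ?v) $ i = (\<Sum>j = 0..<n. ?B $$ (i, j) * ?v $ j)"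
    using i by (simp add: scalar_prod_def PhiMat_merged_def n_def)
  also have "\<dots> = ?B $$ (i, 0) + (\<Sum>j = 1..<n. PhiMat p \<phi> 1 t s $$ (i, j) * y (s + int j))"
    using i by (simp add: sum.atLeast_Suc_lessThan) (auto simp: PhiMat_merged_def n_def intro!: sum.cong)
  also have "\<dots> = (\<Sum>m = 1..p. g (m + i)) + (\<Sum>j = 1..i. g (i - j + 1))
      - (if i + 1 < n then y ?T else 0)"
    using i PhiMat_row_tail[of i t s p \<phi> 1 y]
    by (simp add: PhiMat_merged_def PhiMat_index n_def g_def algebra_simps)
  also have "\<dots> = (\<Sum>l = 1..p + i. g l) - (if i + 1 < n then y ?T else 0)"
    by (simp only: sum_shifted_plus_reversed)
  also have "\<dots> = y ?T - (if i + 1 < n then y ?T else 0)"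
    using rec[of ?T] unfolding g_def sum_phiext_lags by simp
  also have "\<dots> = ?w $ i"
    using i \<open>s < t\<close> by (auto simp: n_def)
  finally show "(?B *\<^sub>v ?v) $ i = ?w $ i" .
qed (simp add: PhiMat_merged_def n_def)

lemma det_PhiMat_merged_replace_first_col:
  assumes "s < t"
  defines "n \<equiv> nat (t - s)"
  shows "det (replace_col (PhiMat_merged p \<phi> y t s) (vec n (\<lambda>i. if i = n - 1 then c else 0)) 0) = c"
    (is "det ?R = c")
proof -
  have "0 < n"
    using assms by simp
  define D where "D = mat_delete ?R (n - 1) 0"
  have D: "D \<in> carrier_mat (n - 1) (n - 1)"
    by (simp add: D_def replace_col_def mat_delete_def PhiMat_merged_def n_def)
  have D_index: "D $$ (i, j) = PhiMat p \<phi> 1 t s $$ (i, Suc j)" if "i < n - 1" "j < n - 1" for i j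
    using that by (simp add: D_def mat_delete_def replace_col_def PhiMat_merged_def n_def)
  have "det D = (\<Prod>i = 0..<n - 1. D $$ (i, i))"
    using det_lower_triangular[OF _ D] D by (simp add: prod_list_diag_prod D_index PhiMat_index n_def)
  also have "\<dots> = (-1) ^ (n - 1)"
    by (simp add: D_index PhiMat_index n_def)
  finally have det_D: "det D = (-1) ^ (n - 1)" .
  have "det ?R = c * (-1) ^ (n - 1) * det D"
    unfolding D_def using PhiMat_merged_carrier[of p \<phi> y t s] \<open>0 < n\<close>
    by (intro det_first_column_last_unit) (auto simp: replace_col_def n_def)
  also have "\<dots> = c"
    by (simp add: det_D mult.assoc)
  finally show ?thesis .
qed

lemma det_PhiMat_expansion:
  fixes y :: "int \<Rightarrow> complex"
  assumes rec: "\<And>t. t \<ge> s + 1 \<Longrightarrow> y t = (\<Sum>l = 1..p. \<phi> l t * y (t - int l))"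
    and "s < t"
  shows "y t = (\<Sum>m = 1..p. det (PhiMat p \<phi> m t s) * y (s - int m + 1))"
proof -
  let ?B = "PhiMat_merged p \<phi> y t s" and ?n = "nat (t - s)"
  let ?v = "vec ?n (\<lambda>j. if j = 0 then 1 else y (s + int j))"
  have "?B *\<^sub>v ?v = vec ?n (\<lambda>i. if i = ?n - 1 then y t else 0)"
    using PhiMat_merged_mult_vec[OF rec \<open>s < t\<close>] by simp
  then have "y t = det (replace_col ?B (?B *\<^sub>v ?v) 0)"
    using det_PhiMat_merged_replace_first_col[OF \<open>s < t\<close>] by simp
  also have "\<dots> = det ?B"
    using cramer_lemma_mat[OF PhiMat_merged_carrier[of p \<phi> y t s], of ?v 0] \<open>s < t\<close> by simp
  finally show ?thesis
    using det_PhiMat_merged[OF \<open>s < t\<close>] by simp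
qed

lemma xi_initial_values:
  fixes y :: "int \<Rightarrow> complex"
  assumes "s - int p + 1 \<le> t" "t \<le> s"
  shows "(\<Sum>m = 1..p. xi p \<phi> m t s * y (s - int m + 1)) = y t"
proof -
  define k where "k = nat (s - t + 1)"
  have k: "k \<in> {1..p}" "t = s - int k + 1"
    using assms by (auto simp: k_def)
  have "(\<Sum>m = 1..p. xi p \<phi> m t s * y (s - int m + 1))
      = (\<Sum>m = 1..p. if m = k then y (s - int m + 1) else 0)"
    using assms k by (intro sum.cong) (auto simp: xi_def)
  then show ?thesis
    using k by (simp add: sum.delta)
qed

theorem proposition3:
  fixes p :: nat and \<phi> :: "nat \<Rightarrow> int \<Rightarrow> complex" and s :: int and y :: "int \<Rightarrow> complex"
  assumes "p \<ge> 1"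
    and rec: "\<And>t. t \<ge> s + 1 \<Longrightarrow> y t = (\<Sum>l = 1..p. \<phi> l t * y (t - int l))"
  shows "\<forall>t \<ge> s - int p + 1. y t = (\<Sum>m = 1..p. xi p \<phi> m t s * y (s - int m + 1))"
proof (intro allI impI)
  fix t assume "t \<ge> s - int p + 1"
  show "y t = (\<Sum>m = 1..p. xi p \<phi> m t s * y (s - int m + 1))"
  proof (cases "t > s")
    case True
    then show ?thesis
      using det_PhiMat_expansion[OF rec] by (simp add: xi_def)
  next
    case False
    then show ?thesis
      using xi_initial_values \<open>t \<ge> s - int p + 1\<close> by simp
  qed
qed

end
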